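(* Let $S$ be $\mathbb{R}$ or $\mathbb{C}$. Then: (i) $n\mapsto g\big[\mathbf{CP}_n(S)\big]$ is non-decreasing; (ii) $g\big[\mathbf{CP}_{2n}(S)\big]\ge2\,g\big[\mathbf{CP}_n(S)\big]$ for all $n\in\mathbb{N}$; (iii) if $k\ge2$ is an integer, $C>0$, and $g\big[\mathbf{CP}_n(S)\big]\ge Cn$ for all $n=k,\dots,2k-1$, then $g\big[\mathbf{CP}_n(S)\big]\ge\frac{(1/k;1/2)_\infty}{1-1/k}\,Cn$ for all $n\ge k$, where $(x;q)_\infty=\prod_{i=0}^{\infty}(1-xq^i)$.
   Context: For an $n\times n$ complex matrix $A=(a_{i,j})$, Gaussian elimination without pivoting is the recursion $a^{(1)}_{i,j}=a_{i,j}$ and $a^{(k+1)}_{i,j}=a^{(k)}_{i,j}-a^{(k)}_{i,k}a^{(k)}_{k,j}/a^{(k)}_{k,k}$ for $k+1\le i,j\le n$, $k=1,\dots,n-1$ (defined when all pivots are nonzero). Growth factor: $g(A)=\max_{i,j,k}|a^{(k)}_{i,j}|/\max_{i,j}|a_{i,j}|$; for a set $\mathbf{X}$ of matrices, $g[\mathbf{X}]=\sup_{A\in\mathbf{X}}g(A)$. $\mathbf{CP}_n(S)$ is the set of invertible $A\in S^{n\times n}$ for which elimination is defined and $|a^{(k)}_{i,j}|\le|a^{(k)}_{k,k}|$ for all $k$ and all $i,j\ge k$. *)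

theory Defs
  imports "HOL-Analysis.Analysis"
begin

text \<open>An n x n matrix is represented as a function nat => nat => complex, with
  0-based indices i, j < n; entries outside the range are required to be 0.
  Real matrices are complex matrices with all entries in the reals.\<close>

type_synonym cmat = "nat \<Rightarrow> nat \<Rightarrow> complex"

text \<open>Gaussian elimination without pivoting (0-based):
  gauss A k is the matrix a^(k+1) of the paper; its entries are meaningful for k <= i, j.\<close>
fun gauss :: "cmat \<Rightarrow> nat \<Rightarrow> cmat" where
  "gauss A 0 = A"
| "gauss A (Suc k) =
     (\<lambda>i j. gauss A k i j - gauss A k i k * gauss A k k j / gauss A k k k)"

definition invertible_mat :: "nat \<Rightarrow> cmat \<Rightarrow> bool" where
  "invertible_mat n A \<longleftrightarrow> (\<exists>B. \<forall>i<n. \<forall>j<n.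
      (\<Sum>l<n. A i l * B l j) = (if i = j then 1 else 0))"

definition elim_defined :: "nat \<Rightarrow> cmat \<Rightarrow> bool" where
  "elim_defined n A \<longleftrightarrow> (\<forall>k<n. gauss A k k k \<noteq> 0)"

definition CP :: "nat \<Rightarrow> complex set \<Rightarrow> cmat set" where
  "CP n S = {A. (\<forall>i<n. \<forall>j<n. A i j \<in> S)
              \<and> (\<forall>i j. (n \<le> i \<or> n \<le> j) \<longrightarrow> A i j = 0)
              \<and> invertible_mat n A
              \<and> elim_defined n A
              \<and> (\<forall>k<n. \<forall>i j. k \<le> i \<and> i < n \<and> k \<le> j \<and> j < n \<longrightarrow>
                    norm (gauss A k i j) \<le> norm (gauss A k k k))}"

definition growth :: "nat \<Rightarrow> cmat \<Rightarrow> real" where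
  "growth n A =
     Max {norm (gauss A k i j) | k i j. k < n \<and> k \<le> i \<and> i < n \<and> k \<le> j \<and> j < n}
     / Max {norm (A i j) | i j. i < n \<and> j < n}"

definition growth_sup :: "nat \<Rightarrow> cmat set \<Rightarrow> ereal" where
  "growth_sup n X = (SUP A\<in>X. ereal (growth n A))"

definition qpoch_inf :: "real \<Rightarrow> real \<Rightarrow> real" where
  "qpoch_inf x q = (\<Prod>i. 1 - x * q ^ i)"

end

theory Submission
  imports Defs
begin

text \<open>Bordering A by its own corner entry, diag(a11, A), keeps it in CP and shifts its
  elimination by one step, so the growth factor does not drop: g[CP_n] is non-decreasing.
  The Kronecker product of A with H = [[1, 1], [1, -1]] stays in CP; its elimination alternates
  between a copy of that of A tensored with H and a step whose pivot is -2 a_kk, while the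
  entry magnitudes are unchanged, so the growth factor doubles.
  For (iii), write n \<in> [2^j m, 2^j (m+1)) with k \<le> m < 2k; then
  g[CP_n] \<ge> g[CP_(2^j m)] \<ge> 2^j C m \<ge> k/(k+1) C n, and
  (1/k; 1/2)_\<infinity> \<le> (1 - 1/k)/(1 + 1/k) bounds the constant of the theorem by k/(k+1).\<close>

lemma CP_memI:
  assumes "\<And>i j. i < n \<Longrightarrow> j < n \<Longrightarrow> A i j \<in> S"
    and "\<And>i j. n \<le> i \<or> n \<le> j \<Longrightarrow> A i j = 0"
    and "invertible_mat n A"
    and "\<And>k. k < n \<Longrightarrow> gauss A k k k \<noteq> 0"
    and "\<And>k i j. k < n \<Longrightarrow> k \<le> i \<Longrightarrow> i < n \<Longrightarrow> k \<le> j \<Longrightarrow> j < n \<Longrightarrow>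
           norm (gauss A k i j) \<le> norm (gauss A k k k)"
  shows "A \<in> CP n S"
  using assms unfolding CP_def elim_defined_def by blast

lemma
  assumes "A \<in> CP n S"
  shows CP_entry_in: "i < n \<Longrightarrow> j < n \<Longrightarrow> A i j \<in> S"
    and CP_zero_outside: "n \<le> i \<or> n \<le> j \<Longrightarrow> A i j = 0"
    and CP_invertible: "invertible_mat n A"
    and CP_pivot_nonzero: "k < n \<Longrightarrow> gauss A k k k \<noteq> 0"
    and CP_stage_le_pivot: "k < n \<Longrightarrow> k \<le> i \<Longrightarrow> i < n \<Longrightarrow> k \<le> j \<Longrightarrow> j < n \<Longrightarrow>
           norm (gauss A k i j) \<le> norm (gauss A k k k)"
  using assms unfolding CP_def elim_defined_def by auto

abbreviation entry_norms :: "nat \<Rightarrow> cmat \<Rightarrow> real set" where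
  "entry_norms n A \<equiv> {norm (A i j) | i j. i < n \<and> j < n}"

abbreviation stage_norms :: "nat \<Rightarrow> cmat \<Rightarrow> real set" where
  "stage_norms n A \<equiv> {norm (gauss A k i j) | k i j. k < n \<and> k \<le> i \<and> i < n \<and> k \<le> j \<and> j < n}"

lemma finite_entry_norms: "finite (entry_norms n A)"
proof -
  have "entry_norms n A \<subseteq> (\<lambda>(i, j). norm (A i j)) ` ({..<n} \<times> {..<n})"
    by fastforce
  then show ?thesis
    by (rule finite_subset) simp
qed

lemma finite_stage_norms: "finite (stage_norms n A)"
proof -
  have "stage_norms n A \<subseteq> (\<lambda>(k, i, j). norm (gauss A k i j)) ` ({..<n} \<times> {..<n} \<times> {..<n})"
    by (rule subsetI, clarify) (auto intro!: image_eqI[where x = "(_, _, _)"])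
  then show ?thesis
    by (rule finite_subset) simp
qed

lemma entry_norm_le_Max:
  "i < n \<Longrightarrow> j < n \<Longrightarrow> norm (A i j) \<le> Max (entry_norms n A)"
  by (intro Max_ge finite_entry_norms) blast

lemma stage_norm_le_Max:
  "k < n \<Longrightarrow> k \<le> i \<Longrightarrow> i < n \<Longrightarrow> k \<le> j \<Longrightarrow> j < n \<Longrightarrow>
     norm (gauss A k i j) \<le> Max (stage_norms n A)"
  by (intro Max_ge finite_stage_norms) blast

lemma Max_entry_norms_le:
  assumes "1 \<le> n" "\<And>i j. i < n \<Longrightarrow> j < n \<Longrightarrow> norm (A i j) \<le> b"
  shows "Max (entry_norms n A) \<le> b"
proof -
  have "Max (entry_norms n A) \<in> entry_norms n A"
    using \<open>1 \<le> n\<close> by (intro Max_in finite_entry_norms) force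
  then obtain i j where "Max (entry_norms n A) = norm (A i j)" "i < n" "j < n"
    by blast
  then show ?thesis
    using assms(2)[of i j] by metis
qed

lemma Max_stage_norms_le:
  assumes "1 \<le> n"
    and "\<And>k i j. k < n \<Longrightarrow> k \<le> i \<Longrightarrow> i < n \<Longrightarrow> k \<le> j \<Longrightarrow> j < n \<Longrightarrow> norm (gauss A k i j) \<le> b"
  shows "Max (stage_norms n A) \<le> b"
proof -
  have "Max (stage_norms n A) \<in> stage_norms n A"
    using \<open>1 \<le> n\<close> by (intro Max_in finite_stage_norms) force
  then obtain k i j where "Max (stage_norms n A) = norm (gauss A k i j)"
    "k < n" "k \<le> i" "i < n" "k \<le> j" "j < n"
    by blast
  then show ?thesis
    using assms(2)[of k i j] by metis
qed

lemma Max_entry_norms_nonneg: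
  assumes "1 \<le> n"
  shows "0 \<le> Max (entry_norms n A)"
proof -
  have "norm (A 0 0) \<le> Max (entry_norms n A)"
    using assms by (intro entry_norm_le_Max) auto
  then show ?thesis
    using norm_ge_zero[of "A 0 0"] by linarith
qed

lemma growth_nonneg:
  assumes "1 \<le> n"
  shows "0 \<le> growth n A"
proof -
  have "norm (gauss A 0 0 0) \<le> Max (stage_norms n A)"
    using assms by (intro stage_norm_le_Max) auto
  then have "0 \<le> Max (stage_norms n A)"
    using norm_ge_zero[of "gauss A 0 0 0"] by linarith
  from this Max_entry_norms_nonneg[OF assms] show ?thesis
    unfolding growth_def by (rule divide_nonneg_nonneg)
qed

lemma CP_Max_stage_norms_at_pivot:
  assumes "A \<in> CP n S" "1 \<le> n"
  obtains k where "k < n" "Max (stage_norms n A) = norm (gauss A k k k)"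
proof -
  have "Max (stage_norms n A) \<in> stage_norms n A"
    using \<open>1 \<le> n\<close> by (intro Max_in finite_stage_norms) force
  then obtain k i j where kij: "Max (stage_norms n A) = norm (gauss A k i j)"
    "k < n" "k \<le> i" "i < n" "k \<le> j" "j < n" by auto
  then have "Max (stage_norms n A) \<le> norm (gauss A k k k)"
    using CP_stage_le_pivot[OF assms(1)] by simp
  moreover have "norm (gauss A k k k) \<le> Max (stage_norms n A)"
    using kij by (intro stage_norm_le_Max) auto
  ultimately show thesis
    using that kij(2) by simp
qed

lemma growth_scaled_le:
  assumes "1 \<le> n" and "Max (entry_norms m B) = Max (entry_norms n A)"
    and "c * Max (stage_norms n A) \<le> Max (stage_norms m B)"
  shows "c * growth n A \<le> growth m B"
  using divide_right_mono[OF assms(3) Max_entry_norms_nonneg[OF assms(1)]] assms(2)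
  unfolding growth_def by simp

lemma growth_sup_scaled_le:
  fixes c :: real
  assumes "0 < c" "1 \<le> n"
    and "\<And>A. A \<in> X \<Longrightarrow> \<exists>B\<in>Y. c * growth n A \<le> growth m B"
  shows "ereal c * growth_sup n X \<le> growth_sup m Y"
proof (cases "X = {}")
  case True
  then show ?thesis
    using \<open>0 < c\<close> by (simp add: growth_sup_def bot_ereal_def)
next
  case False
  have "ereal c * growth_sup n X = (SUP A\<in>X. ereal c * ereal (growth n A))"
    unfolding growth_sup_def
    using False growth_nonneg[OF \<open>1 \<le> n\<close>] \<open>0 < c\<close> by (subst SUP_ereal_mult_left) auto
  also have "\<dots> \<le> growth_sup m Y"
    unfolding growth_sup_def
  proof (rule SUP_least)
    fix A assume "A \<in> X"
    then obtain B where "B \<in> Y" "c * growth n A \<le> growth m B"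
      using assms(3) by blast
    then show "ereal c * ereal (growth n A) \<le> (SUP B\<in>Y. ereal (growth m B))"
      by (intro SUP_upper2) auto
  qed
  finally show ?thesis .
qed

section \<open>Bordering: monotonicity in the dimension\<close>

definition border :: "complex \<Rightarrow> cmat \<Rightarrow> cmat" where
  "border c A i j = (if i = 0 \<and> j = 0 then c else if i = 0 \<or> j = 0 then 0 else A (i - 1) (j - 1))"

lemma gauss_border: "gauss (border c A) (Suc k) (Suc i) (Suc j) = gauss A k i j"
proof (induction k arbitrary: i j)
  case 0
  then show ?case by (simp add: border_def)
next
  case (Suc k)
  show ?case
    by (subst gauss.simps(2)) (simp only: Suc.IH gauss.simps(2)[of A k])
qed

lemma invertible_border:
  assumes "invertible_mat n A" "c \<noteq> 0"
  shows "invertible_mat (Suc n) (border c A)"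
proof -
  from assms(1) obtain A' where A': "\<forall>i<n. \<forall>j<n. (\<Sum>l<n. A i l * A' l j) = (if i = j then 1 else 0)"
    unfolding invertible_mat_def by blast
  have "(\<Sum>l<Suc n. border c A i l * border (1 / c) A' l j) = (if i = j then 1 else 0)"
    if "i < Suc n" "j < Suc n" for i j
  proof (cases "i = 0 \<or> j = 0")
    case True
    then show ?thesis
      using assms(2) unfolding sum.lessThan_Suc_shift by (auto simp: border_def)
  next
    case False
    then obtain i' j' where "i = Suc i'" "j = Suc j'"
      by (metis not0_implies_Suc)
    then show ?thesis
      using that A' unfolding sum.lessThan_Suc_shift by (auto simp: border_def)
  qed
  then show ?thesis
    unfolding invertible_mat_def by blast
qed

lemma border_in_CP:
  assumes A: "A \<in> CP n S" and "1 \<le> n" "0 \<in> S"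
  shows "border (A 0 0) A \<in> CP (Suc n) S"
proof (rule CP_memI)
  let ?B = "border (A 0 0) A"
  have "A 0 0 \<noteq> 0"
    using CP_pivot_nonzero[OF A, of 0] \<open>1 \<le> n\<close> by simp
  then show "invertible_mat (Suc n) ?B"
    by (rule invertible_border[OF CP_invertible[OF A]])
  show "?B i j \<in> S" if "i < Suc n" "j < Suc n" for i j
    using that CP_entry_in[OF A] \<open>1 \<le> n\<close> \<open>0 \<in> S\<close> by (auto simp: border_def)
  show "?B i j = 0" if "Suc n \<le> i \<or> Suc n \<le> j" for i j
  proof -
    from that have "n \<le> i - 1 \<or> n \<le> j - 1"
      by auto
    from CP_zero_outside[OF A this] that show ?thesis
      by (auto simp: border_def)
  qed
  show "gauss ?B s s s \<noteq> 0" if "s < Suc n" for s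
  proof (cases s)
    case 0
    then show ?thesis
      using \<open>A 0 0 \<noteq> 0\<close> by (simp add: border_def)
  next
    case (Suc k)
    then show ?thesis
      using that CP_pivot_nonzero[OF A, of k] by (simp del: gauss.simps add: gauss_border)
  qed
  show "norm (gauss ?B s i j) \<le> norm (gauss ?B s s s)"
    if ij: "s < Suc n" "s \<le> i" "i < Suc n" "s \<le> j" "j < Suc n" for s i j
  proof (cases s)
    case 0
    have "norm (A i' j') \<le> norm (A 0 0)" if "i' < n" "j' < n" for i' j'
      using CP_stage_le_pivot[OF A, of 0 i' j'] \<open>1 \<le> n\<close> that by simp
    then show ?thesis
      using 0 ij by (auto simp: border_def)
  next
    case (Suc k)
    obtain i' j' where "i = Suc i'" "j = Suc j'"
      using Suc ij by (cases i; cases j) auto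
    then show ?thesis
      using Suc ij CP_stage_le_pivot[OF A, of k i' j'] by (simp del: gauss.simps add: gauss_border)
  qed
qed

lemma growth_border_ge:
  assumes "A \<in> CP n S" "1 \<le> n"
  shows "growth n A \<le> growth (Suc n) (border (A 0 0) A)"
proof -
  let ?B = "border (A 0 0) A"
  have border_entries: "norm (?B i j) \<le> Max (entry_norms n A)" if "i < Suc n" "j < Suc n" for i j
    using that entry_norm_le_Max[of 0 n 0 A] entry_norm_le_Max[of "i - 1" n "j - 1" A]
      Max_entry_norms_nonneg[OF \<open>1 \<le> n\<close>, of A] \<open>1 \<le> n\<close>
    by (auto simp: border_def)
  have "Max (entry_norms (Suc n) ?B) \<le> Max (entry_norms n A)"
    by (rule Max_entry_norms_le[OF _ border_entries]) simp
  moreover have "norm (A i j) \<le> Max (entry_norms (Suc n) ?B)" if "i < n" "j < n" for i j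
    using that entry_norm_le_Max[of "Suc i" "Suc n" "Suc j" ?B] by (simp add: border_def)
  then have "Max (entry_norms n A) \<le> Max (entry_norms (Suc n) ?B)"
    by (rule Max_entry_norms_le[OF \<open>1 \<le> n\<close>])
  ultimately have entries: "Max (entry_norms (Suc n) ?B) = Max (entry_norms n A)"
    by (rule antisym)
  have "norm (gauss A k i j) \<le> Max (stage_norms (Suc n) ?B)"
    if "k < n" "k \<le> i" "i < n" "k \<le> j" "j < n" for k i j
    using that stage_norm_le_Max[of "Suc k" "Suc n" "Suc i" "Suc j" ?B]
    by (simp del: gauss.simps add: gauss_border)
  then have "1 * Max (stage_norms n A) \<le> Max (stage_norms (Suc n) ?B)"
    unfolding mult_1 by (rule Max_stage_norms_le[OF \<open>1 \<le> n\<close>])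
  from growth_scaled_le[OF \<open>1 \<le> n\<close> entries this] show ?thesis
    by (simp only: mult_1)
qed

lemma growth_sup_CP_mono:
  assumes "0 \<in> S" "1 \<le> n" "n \<le> m"
  shows "growth_sup n (CP n S) \<le> growth_sup m (CP m S)"
  using \<open>n \<le> m\<close>
proof (induction m rule: dec_induct)
  case base
  then show ?case by simp
next
  case (step m)
  with \<open>1 \<le> n\<close> have "1 \<le> m" by simp
  have "\<exists>B\<in>CP (Suc m) S. 1 * growth m A \<le> growth (Suc m) B" if "A \<in> CP m S" for A
    using border_in_CP[OF that \<open>1 \<le> m\<close> \<open>0 \<in> S\<close>] growth_border_ge[OF that \<open>1 \<le> m\<close>]
    by auto
  from growth_sup_scaled_le[where c = 1, OF zero_less_one \<open>1 \<le> m\<close> this]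
  have "growth_sup m (CP m S) \<le> growth_sup (Suc m) (CP (Suc m) S)"
    unfolding one_ereal_def[symmetric] mult_1 .
  with step.IH show ?case
    by (rule order_trans)
qed

section \<open>Kronecker product with a Hadamard matrix: doubling\<close>

text \<open>H = [[1, 1], [1, -1]] with 0-based indices, so that kron_hadamard A = A \<otimes> H.\<close>
definition hadamard2 :: "nat \<Rightarrow> nat \<Rightarrow> complex" where
  "hadamard2 a b = (if a = 1 \<and> b = 1 then -1 else 1)"

definition kron_hadamard :: "cmat \<Rightarrow> cmat" where
  "kron_hadamard A i j = A (i div 2) (j div 2) * hadamard2 (i mod 2) (j mod 2)"

lemma norm_hadamard2 [simp]: "norm (hadamard2 a b) = 1"
  by (simp add: hadamard2_def)

lemma gauss_kron_hadamard_odd_step: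
  assumes "\<And>i j. gauss (kron_hadamard A) (2 * k) i j =
                  gauss A k (i div 2) (j div 2) * hadamard2 (i mod 2) (j mod 2)"
  shows "gauss (kron_hadamard A) (Suc (2 * k)) i j =
           gauss A k (i div 2) (j div 2) * hadamard2 (i mod 2) (j mod 2)
           - gauss A k (i div 2) k * gauss A k k (j div 2) / gauss A k k k"
  by (simp add: assms hadamard2_def)

lemma gauss_kron_hadamard_even:
  "gauss (kron_hadamard A) (2 * k) i j = gauss A k (i div 2) (j div 2) * hadamard2 (i mod 2) (j mod 2)"
proof (induction k arbitrary: i j)
  case 0
  then show ?case by (simp add: kron_hadamard_def)
next
  case (Suc k)
  have e: "2 * Suc k = Suc (Suc (2 * k))" by simp
  have d: "Suc (2 * k) div 2 = k" "Suc (2 * k) mod 2 = 1"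
    by presburger+
  have "i mod 2 = 0 \<or> i mod 2 = 1" "j mod 2 = 0 \<or> j mod 2 = 1"
    by presburger+
  then show ?case
    unfolding e gauss.simps(2)[of _ "Suc (2 * k)"] gauss_kron_hadamard_odd_step[OF Suc.IH] d
    by (cases "gauss A k k k = 0") (auto simp: hadamard2_def field_simps)
qed

lemmas gauss_kron_hadamard_odd = gauss_kron_hadamard_odd_step[OF gauss_kron_hadamard_even]

lemma gauss_kron_hadamard_pivot_even:
  "gauss (kron_hadamard A) (2 * k) (2 * k) (2 * k) = gauss A k k k"
  by (simp add: gauss_kron_hadamard_even hadamard2_def)

lemma gauss_kron_hadamard_pivot_odd:
  assumes "gauss A k k k \<noteq> 0"
  shows "gauss (kron_hadamard A) (Suc (2 * k)) (Suc (2 * k)) (Suc (2 * k)) = - 2 * gauss A k k k"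
proof -
  have "Suc (2 * k) div 2 = k" "Suc (2 * k) mod 2 = 1" by presburger+
  then show ?thesis
    using assms by (simp del: gauss.simps add: gauss_kron_hadamard_odd hadamard2_def)
qed

lemma sum_lessThan_double: "(\<Sum>l<2 * n. f l) = (\<Sum>l<n. f (2 * l) + f (Suc (2 * l)))"
  by (induction n) (simp_all add: sum.distrib add_ac)

lemma invertible_kron_hadamard:
  assumes "invertible_mat n A"
  shows "invertible_mat (2 * n) (kron_hadamard A)"
proof -
  from assms obtain A' where A': "\<forall>i<n. \<forall>j<n. (\<Sum>l<n. A i l * A' l j) = (if i = j then 1 else 0)"
    unfolding invertible_mat_def by blast
  txt \<open>H * H = 2 I, so (A' \<otimes> H) / 2 is the inverse.\<close>
  define B where "B i j = kron_hadamard A' i j / 2" for i j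
  have "(\<Sum>l<2 * n. kron_hadamard A i l * B l j) = (if i = j then 1 else 0)"
    if "i < 2 * n" "j < 2 * n" for i j
  proof -
    have parity: "i mod 2 = 0 \<or> i mod 2 = 1" "j mod 2 = 0 \<or> j mod 2 = 1" by presburger+
    have "(\<Sum>l<2 * n. kron_hadamard A i l * B l j) =
          (\<Sum>l<n. A (i div 2) l * A' l (j div 2)) * (if i mod 2 = j mod 2 then 1 else 0)"
      unfolding sum_lessThan_double sum_distrib_right
      using parity by (intro sum.cong) (auto simp: kron_hadamard_def B_def hadamard2_def field_simps)
    moreover have "i = j \<longleftrightarrow> i div 2 = j div 2 \<and> i mod 2 = j mod 2"
      by (metis div_mult_mod_eq)
    ultimately show ?thesis
      using A' that by auto
  qed
  then show ?thesis
    unfolding invertible_mat_def by blast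
qed

lemma kron_hadamard_in_CP:
  assumes A: "A \<in> CP n S" and neg: "\<And>x. x \<in> S \<Longrightarrow> - x \<in> S"
  shows "kron_hadamard A \<in> CP (2 * n) S"
proof (rule CP_memI)
  let ?B = "kron_hadamard A"
  have parity: "s = 2 * (s div 2) \<or> s = Suc (2 * (s div 2))" for s :: nat
    by presburger
  show "invertible_mat (2 * n) ?B"
    by (rule invertible_kron_hadamard[OF CP_invertible[OF A]])
  show "?B i j \<in> S" if "i < 2 * n" "j < 2 * n" for i j
    using that CP_entry_in[OF A, of "i div 2" "j div 2"] neg
    by (auto simp: kron_hadamard_def hadamard2_def)
  show "?B i j = 0" if "2 * n \<le> i \<or> 2 * n \<le> j" for i j
  proof -
    from that have "n \<le> i div 2 \<or> n \<le> j div 2"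
      by auto
    from CP_zero_outside[OF A this] show ?thesis
      by (simp add: kron_hadamard_def)
  qed
  show "gauss ?B s s s \<noteq> 0" if "s < 2 * n" for s
  proof -
    define k where "k = s div 2"
    have "gauss A k k k \<noteq> 0"
      using that CP_pivot_nonzero[OF A, of k] by (simp add: k_def)
    with parity[of s] show ?thesis
      unfolding k_def[symmetric]
      using gauss_kron_hadamard_pivot_even[of A k] gauss_kron_hadamard_pivot_odd[of A k] by auto
  qed
  show "norm (gauss ?B s i j) \<le> norm (gauss ?B s s s)"
    if ij: "s < 2 * n" "s \<le> i" "i < 2 * n" "s \<le> j" "j < 2 * n" for s i j
  proof -
    define k where "k = s div 2"
    have bound: "norm (gauss A k I J) \<le> norm (gauss A k k k)"
      if "I \<in> {k, i div 2}" "J \<in> {k, j div 2}" for I J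
      using CP_stage_le_pivot[OF A, of k I J] ij that unfolding k_def by auto
    from parity[of s] show ?thesis
      unfolding k_def[symmetric]
    proof
      assume s: "s = 2 * k"
      show ?thesis
        using bound[of "i div 2" "j div 2"] unfolding s
        by (simp add: gauss_kron_hadamard_even gauss_kron_hadamard_pivot_even norm_mult)
    next
      assume s: "s = Suc (2 * k)"
      have "k < n"
        using ij unfolding k_def by simp
      note pivot = CP_pivot_nonzero[OF A this]
      have "norm (gauss ?B s i j) \<le> norm (gauss A k (i div 2) (j div 2))
             + norm (gauss A k (i div 2) k) * norm (gauss A k k (j div 2)) / norm (gauss A k k k)"
        unfolding s gauss_kron_hadamard_odd
        by (rule order_trans[OF norm_triangle_ineq4]) (simp add: norm_mult norm_divide)
      also have "\<dots> \<le> norm (gauss A k k k) + norm (gauss A k k k) * norm (gauss A k k k) / norm (gauss A k k k)"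
        by (intro add_mono divide_right_mono mult_mono bound) auto
      also have "\<dots> = norm (gauss ?B s s s)"
        using pivot unfolding s
        by (simp add: gauss_kron_hadamard_pivot_odd norm_mult del: gauss.simps)
      finally show ?thesis .
    qed
  qed
qed

lemma growth_kron_hadamard_ge:
  assumes "A \<in> CP n S" "1 \<le> n"
  shows "2 * growth n A \<le> growth (2 * n) (kron_hadamard A)"
proof (rule growth_scaled_le[OF \<open>1 \<le> n\<close>])
  let ?B = "kron_hadamard A"
  have "entry_norms (2 * n) ?B = entry_norms n A"
  proof (intro equalityI subsetI)
    fix x assume "x \<in> entry_norms (2 * n) ?B"
    then obtain i j where "x = norm (A (i div 2) (j div 2))" "i div 2 < n" "j div 2 < n"
      by (auto simp: kron_hadamard_def norm_mult)
    then show "x \<in> entry_norms n A" by blast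
  next
    fix x assume "x \<in> entry_norms n A"
    then obtain i j where "x = norm (?B (2 * i) (2 * j))" "2 * i < 2 * n" "2 * j < 2 * n"
      by (auto simp: kron_hadamard_def hadamard2_def)
    then show "x \<in> entry_norms (2 * n) ?B" by blast
  qed
  then show "Max (entry_norms (2 * n) ?B) = Max (entry_norms n A)" by simp
  obtain k where "k < n" "Max (stage_norms n A) = norm (gauss A k k k)"
    using CP_Max_stage_norms_at_pivot[OF assms] .
  moreover have "gauss A k k k \<noteq> 0"
    using CP_pivot_nonzero[OF assms(1) \<open>k < n\<close>] .
  ultimately show "2 * Max (stage_norms n A) \<le> Max (stage_norms (2 * n) ?B)"
    using stage_norm_le_Max[of "Suc (2 * k)" "2 * n" "Suc (2 * k)" "Suc (2 * k)" ?B]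
    by (simp add: gauss_kron_hadamard_pivot_odd norm_mult del: gauss.simps)
qed

lemma growth_sup_CP_double:
  assumes "\<And>x. x \<in> S \<Longrightarrow> - x \<in> S" "1 \<le> n"
  shows "2 * growth_sup n (CP n S) \<le> growth_sup (2 * n) (CP (2 * n) S)"
  using growth_sup_scaled_le[of 2 n "CP n S" "CP (2 * n) S" "2 * n"]
    kron_hadamard_in_CP[OF _ assms(1)] growth_kron_hadamard_ge[OF _ \<open>1 \<le> n\<close>] \<open>1 \<le> n\<close>
  by fastforce

lemma growth_sup_CP_dyadic:
  assumes "\<And>x. x \<in> S \<Longrightarrow> - x \<in> S" "1 \<le> m" "0 \<le> C"
    and "ereal (C * real m) \<le> growth_sup m (CP m S)"
  shows "ereal (2 ^ j * C * real m) \<le> growth_sup (2 ^ j * m) (CP (2 ^ j * m) S)"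
proof (induction j)
  case 0
  then show ?case using assms(4) by simp
next
  case (Suc j)
  have "ereal (2 ^ Suc j * C * real m) = 2 * ereal (2 ^ j * C * real m)"
    by simp
  also have "\<dots> \<le> 2 * growth_sup (2 ^ j * m) (CP (2 ^ j * m) S)"
    by (rule ereal_mult_left_mono[OF Suc.IH]) simp
  also have "\<dots> \<le> growth_sup (2 ^ Suc j * m) (CP (2 ^ Suc j * m) S)"
    using growth_sup_CP_double[OF assms(1), of "2 ^ j * m"] \<open>1 \<le> m\<close> by (simp add: mult.assoc)
  finally show ?case .
qed

section \<open>From a linear bound on one octave to all dimensions\<close>

lemma dyadic_block_decomposition:
  fixes k n :: nat
  assumes "1 \<le> k" "k \<le> n"
  obtains j m where "k \<le> m" "m < 2 * k" "2 ^ j * m \<le> n" "n < 2 ^ j * (m + 1)"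
  using assms(2)
proof (induction n arbitrary: thesis rule: less_induct)
  case (less n)
  show ?case
  proof (cases "n < 2 * k")
    case True
    then show ?thesis
      using less.prems by (intro less.prems(1)[of n 0]) auto
  next
    case False
    with \<open>1 \<le> k\<close> have "k \<le> n div 2" "n div 2 < n" by auto
    then obtain j m where "k \<le> m" "m < 2 * k" "2 ^ j * m \<le> n div 2" "n div 2 < 2 ^ j * (m + 1)"
      using less.IH by metis
    then show ?thesis
      by (intro less.prems(1)[of m "Suc j"]) auto
  qed
qed

lemma dyadic_block_ratio_le:
  fixes k m n j :: nat and C :: real
  assumes "k \<le> m" "n < 2 ^ j * (m + 1)" "0 \<le> C"
  shows "real k / (real k + 1) * C * real n \<le> 2 ^ j * C * real m"
proof -
  have "k * (m + 1) \<le> (k + 1) * m"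
    using assms(1) by (simp add: algebra_simps)
  have "k * n \<le> k * (2 ^ j * (m + 1))"
    using assms(2) by (intro mult_le_mono2) linarith
  also have "\<dots> = 2 ^ j * (k * (m + 1))"
    by (rule mult.left_commute)
  also have "\<dots> \<le> 2 ^ j * ((k + 1) * m)"
    using \<open>k * (m + 1) \<le> (k + 1) * m\<close> by (rule mult_le_mono2)
  also have "\<dots> = (k + 1) * (2 ^ j * m)"
    by (rule mult.left_commute)
  finally have "real (k * n) \<le> real ((k + 1) * (2 ^ j * m))"
    by (rule of_nat_mono)
  then have "real k * real n / (real k + 1) \<le> 2 ^ j * real m"
    by (simp add: pos_divide_le_eq algebra_simps)
  from mult_left_mono[OF this \<open>0 \<le> C\<close>] show ?thesis
    by (simp add: mult_ac)
qed

lemma growth_sup_CP_linear_extension: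
  assumes "\<And>x. x \<in> S \<Longrightarrow> - x \<in> S" "0 \<in> S" "1 \<le> k" "0 \<le> C"
    and octave: "\<And>m. k \<le> m \<Longrightarrow> m < 2 * k \<Longrightarrow> ereal (C * real m) \<le> growth_sup m (CP m S)"
    and "k \<le> n"
  shows "ereal (real k / (real k + 1) * C * real n) \<le> growth_sup n (CP n S)"
proof -
  obtain j m where jm: "k \<le> m" "m < 2 * k" "2 ^ j * m \<le> n" "n < 2 ^ j * (m + 1)"
    using dyadic_block_decomposition[OF \<open>1 \<le> k\<close> \<open>k \<le> n\<close>] .
  with \<open>1 \<le> k\<close> have "1 \<le> m" by simp
  from dyadic_block_ratio_le[OF jm(1,4) \<open>0 \<le> C\<close>]
  have "real k / (real k + 1) * C * real n \<le> 2 ^ j * C * real m" .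
  then have "ereal (real k / (real k + 1) * C * real n) \<le> ereal (2 ^ j * C * real m)"
    by simp
  also have "\<dots> \<le> growth_sup (2 ^ j * m) (CP (2 ^ j * m) S)"
    using octave jm by (intro growth_sup_CP_dyadic assms(1) \<open>1 \<le> m\<close> \<open>0 \<le> C\<close>) auto
  also have "\<dots> \<le> growth_sup n (CP n S)"
    using \<open>1 \<le> m\<close> jm(3) by (intro growth_sup_CP_mono \<open>0 \<in> S\<close>) simp_all
  finally show ?thesis .
qed

section \<open>The q-Pochhammer constant\<close>

lemma partial_qpoch_half_le:
  fixes x :: real
  assumes "0 \<le> x" "x \<le> 1"
  shows "(\<Prod>i\<le>N. 1 - x * (1 / 2) ^ i) \<le> (1 - x) * (1 + x * (1 / 2) ^ N) / (1 + x)"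
proof (induction N)
  case 0
  then show ?case using assms by simp
next
  case (Suc N)
  define y :: real where "y = x * (1 / 2) ^ N"
  have "0 \<le> y" "y \<le> 1"
    using assms unfolding y_def by (auto intro: mult_le_one simp: power_le_one)
  have "(\<Prod>i\<le>Suc N. 1 - x * (1 / 2) ^ i) = (\<Prod>i\<le>N. 1 - x * (1 / 2) ^ i) * (1 - y / 2)"
    by (simp add: y_def)
  also have "\<dots> \<le> (1 - x) * (1 + y) / (1 + x) * (1 - y / 2)"
    using Suc.IH \<open>y \<le> 1\<close> unfolding y_def by (intro mult_right_mono) auto
  also have "\<dots> = (1 - x) * (1 + y / 2 - y\<^sup>2 / 2) / (1 + x)"
    using assms by (simp add: field_simps power2_eq_square)
  also have "\<dots> \<le> (1 - x) * (1 + y / 2) / (1 + x)"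
    using assms by (intro divide_right_mono mult_left_mono) auto
  also have "\<dots> = (1 - x) * (1 + x * (1 / 2) ^ Suc N) / (1 + x)"
    by (simp add: y_def)
  finally show ?case .
qed

lemma qpoch_inf_half_le:
  fixes x :: real
  assumes "0 \<le> x" "x \<le> 1"
  shows "qpoch_inf x (1 / 2) \<le> (1 - x) / (1 + x)"
proof -
  define f where "f i = 1 - x * (1 / 2) ^ i" for i :: nat
  have "summable (\<lambda>i. norm (f i - 1))"
    using summable_mult[OF summable_geometric[of "1 / 2 :: real"], of x] \<open>0 \<le> x\<close>
    by (simp add: f_def)
  then have "(\<lambda>N. \<Prod>i\<le>N. f i) \<longlonglongrightarrow> prodinf f"
    by (intro convergent_prod_LIMSEQ abs_convergent_prod_imp_convergent_prod
        summable_imp_abs_convergent_prod)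
  moreover have "(\<lambda>N. (1 - x) * (1 + x * (1 / 2) ^ N) / (1 + x)) \<longlonglongrightarrow> (1 - x) * (1 + x * 0) / (1 + x)"
    using \<open>0 \<le> x\<close> by (intro tendsto_intros LIMSEQ_realpow_zero) auto
  ultimately have "prodinf f \<le> (1 - x) * (1 + x * 0) / (1 + x)"
    using partial_qpoch_half_le[OF assms] by (intro LIMSEQ_le) (auto simp: f_def)
  then show ?thesis
    unfolding qpoch_inf_def f_def by simp
qed

lemma qpoch_inf_half_ratio_le:
  assumes "2 \<le> k"
  shows "qpoch_inf (1 / real k) (1 / 2) / (1 - 1 / real k) \<le> real k / (real k + 1)"
proof -
  have "0 < 1 - 1 / real k" "1 / real k \<le> 1"
    using assms by (simp_all add: field_simps)
  have "qpoch_inf (1 / real k) (1 / 2) / (1 - 1 / real k)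
        \<le> (1 - 1 / real k) / (1 + 1 / real k) / (1 - 1 / real k)"
    using qpoch_inf_half_le[OF _ \<open>1 / real k \<le> 1\<close>] \<open>0 < 1 - 1 / real k\<close>
    by (intro divide_right_mono) auto
  also have "\<dots> = 1 / (1 + 1 / real k)"
    using \<open>0 < 1 - 1 / real k\<close> assms by simp
  also have "\<dots> = real k / (real k + 1)"
    using assms by (simp add: field_simps)
  finally show ?thesis .
qed

theorem mainTheorem10:
  fixes S :: "complex set"
  assumes "S = \<real> \<or> S = UNIV"
  shows "(\<forall>n m. 1 \<le> n \<and> n \<le> m \<longrightarrow> growth_sup n (CP n S) \<le> growth_sup m (CP m S))
       \<and> (\<forall>n\<ge>1. growth_sup (2 * n) (CP (2 * n) S) \<ge> 2 * growth_sup n (CP n S))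
       \<and> (\<forall>(k::nat) (C::real). k \<ge> 2 \<and> C > 0 \<and>
             (\<forall>n. k \<le> n \<and> n \<le> 2 * k - 1 \<longrightarrow> growth_sup n (CP n S) \<ge> ereal (C * real n))
           \<longrightarrow> (\<forall>n\<ge>k. growth_sup n (CP n S) \<ge>
                 ereal (qpoch_inf (1 / real k) (1 / 2) / (1 - 1 / real k) * C * real n)))"
proof -
  have zero: "0 \<in> S" and neg: "\<And>x. x \<in> S \<Longrightarrow> - x \<in> S"
    using assms by auto
  have "ereal (qpoch_inf (1 / real k) (1 / 2) / (1 - 1 / real k) * C * real n) \<le> growth_sup n (CP n S)"
    if "2 \<le> k" "0 < C" "k \<le> n"
      and octave: "\<forall>n. k \<le> n \<and> n \<le> 2 * k - 1 \<longrightarrow> ereal (C * real n) \<le> growth_sup n (CP n S)"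
    for k n C
  proof -
    have "qpoch_inf (1 / real k) (1 / 2) / (1 - 1 / real k) * C * real n
          \<le> real k / (real k + 1) * C * real n"
      using qpoch_inf_half_ratio_le[OF \<open>2 \<le> k\<close>] \<open>0 < C\<close> by (intro mult_right_mono) auto
    then have "ereal (qpoch_inf (1 / real k) (1 / 2) / (1 - 1 / real k) * C * real n)
          \<le> ereal (real k / (real k + 1) * C * real n)"
      by simp
    also have "\<dots> \<le> growth_sup n (CP n S)"
      using that by (intro growth_sup_CP_linear_extension neg zero) auto
    finally show ?thesis .
  qed
  then show ?thesis
    using growth_sup_CP_mono[OF zero] growth_sup_CP_double[OF neg] by auto
qed

end
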